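(* Let $W:\mathbb{M}^{d\times d}\to[0,+\infty)$ satisfy (H1)–(H5) and (H7), and let $0<\delta\le\delta_W/2$. Set $\mathcal{V}_\delta=\{F\in\mathbb{M}^{d\times d}:\mathrm{dist}(F,SO(d)\{A,B\})<\delta\}$. Then there exist a constant $C>0$ depending only on $W$, a constant $C_\delta>0$ depending additionally on $\delta$, and $\rho_\delta>0$ with $\rho_\delta\to0$ as $\delta\to0$, such that (i) $W(F+G)\le W(F)+C\sqrt{W(F)}\,|G|+\frac12D^2W(F)G:G+\rho_\delta|G|^2$ for all $F\in\mathcal{V}_\delta$ and all $G$ with $|G|<\delta$; (ii) $W(F+G)\le W(F)+C_\delta\sqrt{W(F)}\,|G|$ for all $F\in\mathbb{M}^{d\times d}\setminus\mathcal{V}_\delta$ and all $G$ with $|G|<\delta$.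
   Context: $d\ge2$, $A=\mathrm{Id}$, $B=\mathrm{diag}(1,\dots,1,1+\kappa)$, $\kappa>0$; $|\cdot|$ is the Frobenius norm. (H1) $W$ continuous; (H2) $W(RF)=W(F)$ for $R\in SO(d)$; (H3) $W(A)=W(B)=0$; (H4) $W(F)\ge c_1\mathrm{dist}^2(F,SO(d)\{A,B\})$ for some $c_1>0$; (H5) there is $\delta_W>0$ such that $W$ is $C^2$ on $\{F:\mathrm{dist}(F,SO(d)\{A,B\})<\delta_W\}$; (H7) $|W(F_1)-W(F_2)|\le c_3(1+|F_1|+|F_2|)|F_1-F_2|$ for all $F_1,F_2$. *)

theory Defs
  imports "HOL-Analysis.Analysis"
begin

definition SOd :: "(real^'d^'d) set" where
  "SOd = {R. rotation_matrix R}"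

text \<open>The well B = diag(1,...,1,1+kappa); the distinguished ("last") coordinate is k0.\<close>
definition wellB :: "real \<Rightarrow> 'd \<Rightarrow> real^'d^'d" where
  "wellB \<kappa> k0 = (\<chi> i j. if i = j then (if i = k0 then 1 + \<kappa> else 1) else 0)"

definition wells :: "real \<Rightarrow> 'd \<Rightarrow> (real^'d^'d) set" where
  "wells \<kappa> k0 = {R ** mat 1 | R. R \<in> SOd} \<union> {R ** wellB \<kappa> k0 | R. R \<in> SOd}"

definition C2_on_with ::
  "(real^'d^'d) set \<Rightarrow> (real^'d^'d \<Rightarrow> real)
   \<Rightarrow> (real^'d^'d \<Rightarrow> ((real^'d^'d) \<Rightarrow>\<^sub>L real))
   \<Rightarrow> (real^'d^'d \<Rightarrow> ((real^'d^'d) \<Rightarrow>\<^sub>L ((real^'d^'d) \<Rightarrow>\<^sub>L real))) \<Rightarrow> bool" where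
  "C2_on_with U W DW D2W \<longleftrightarrow>
     (\<forall>F\<in>U. (W has_derivative blinfun_apply (DW F)) (at F)) \<and>
     (\<forall>F\<in>U. (DW has_derivative blinfun_apply (D2W F)) (at F)) \<and>
     continuous_on U DW \<and> continuous_on U D2W"

end

theory Submission
  imports Defs
begin

text \<open>
Near the wells \<open>W\<close> is \<open>C\<^sup>2\<close> on a compact neighbourhood, where \<open>D\<^sup>2W\<close> is bounded and uniformly
continuous, so Taylor's formula gives (i) with a remainder that is \<open>o(|G|\<^sup>2)\<close> uniformly in \<open>F\<close>,
except that the first-order term must be controlled by \<open>sqrt (W F)\<close>: a nonnegative function
with bounded Hessian satisfies \<open>|DW(F)| \<le> C sqrt (W F)\<close>, as one sees by testing
\<open>0 \<le> W (F + h)\<close> along \<open>h = -s G/|G|\<close> and optimising in \<open>s\<close>. Increments that are not small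
are absorbed into the quadratic term by the growth condition (H7).
Away from the wells, (H4) gives \<open>sqrt (W F) \<ge> sqrt c\<^sub>1 dist(F, SO(d){A,B})\<close>, and this distance
also dominates the right-hand side of (H7).
\<close>

lemma norm_le_infdist_add:
  fixes S :: "'a::real_normed_vector set"
  assumes "bounded S" "S \<noteq> {}"
  obtains M where "0 \<le> M" "\<And>x. norm x \<le> infdist x S + M"
proof -
  obtain M where M: "0 < M" "\<And>s. s \<in> S \<Longrightarrow> norm s \<le> M"
    using assms(1) unfolding bounded_pos by blast
  have lower: "norm x - M \<le> infdist x S" for x
    unfolding infdist_notempty[OF assms(2)]
  proof (rule cINF_greatest[OF assms(2)])
    fix s assume "s \<in> S"
    then show "norm x - M \<le> dist x s"
      using M(2) norm_triangle_ineq2[of x s] by (fastforce simp: dist_norm)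
  qed
  show thesis
  proof (rule that)
    show "0 \<le> M" using M(1) by simp
    show "norm x \<le> infdist x S + M" for x using lower[of x] by simp
  qed
qed

lemma compact_infdist_le_bounded:
  fixes S :: "'a::euclidean_space set"
  assumes "bounded S" "S \<noteq> {}"
  shows "compact {x. infdist x S \<le> r}"
proof -
  obtain M where "\<And>x. norm x \<le> infdist x S + M"
    using norm_le_infdist_add[OF assms] by blast
  then have "bounded {x. infdist x S \<le> r}"
    unfolding bounded_iff by (metis add_right_mono mem_Collect_eq order_trans)
  moreover have "closed {x. infdist x S \<le> r}"
    by (intro closed_Collect_le continuous_on_infdist continuous_on_id continuous_on_const)
  ultimately show ?thesis by (simp add: compact_eq_bounded_closed)
qed

lemma abs_blinfun_apply2_le:
  fixes A :: "'a::real_normed_vector \<Rightarrow>\<^sub>L 'a \<Rightarrow>\<^sub>L real"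
  shows "\<bar>A h h\<bar> \<le> norm A * (norm h)\<^sup>2"
proof -
  have "\<bar>A h h\<bar> \<le> norm (A h) * norm h"
    using norm_blinfun[of "A h" h] by simp
  also have "\<dots> \<le> norm A * norm h * norm h"
    by (intro mult_right_mono norm_blinfun) auto
  finally show ?thesis by (simp add: power2_eq_square mult.assoc)
qed

lemma Taylor_second_order_segment:
  fixes f :: "'a::real_normed_vector \<Rightarrow> real"
  assumes f_deriv: "\<And>t. 0 \<le> t \<Longrightarrow> t \<le> 1 \<Longrightarrow>
      (f has_derivative blinfun_apply (Df (x + t *\<^sub>R h))) (at (x + t *\<^sub>R h))"
    and Df_deriv: "\<And>t. 0 \<le> t \<Longrightarrow> t \<le> 1 \<Longrightarrow>
      (Df has_derivative blinfun_apply (D2f (x + t *\<^sub>R h))) (at (x + t *\<^sub>R h))"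
  obtains t where "0 < t" "t < 1" "f (x + h) = f x + Df x h + 1/2 * D2f (x + t *\<^sub>R h) h h"
proof -
  have line: "((\<lambda>t. x + t *\<^sub>R h) has_derivative (\<lambda>s. s *\<^sub>R h)) (at t)" for t
    by (auto intro!: derivative_eq_intros)
  have d1: "((\<lambda>t. f (x + t *\<^sub>R h)) has_real_derivative Df (x + t *\<^sub>R h) h) (at t)"
    if "0 \<le> t" "t \<le> 1" for t
    using has_derivative_compose[OF line f_deriv[OF that]]
    by (simp add: has_real_derivative_iff_has_vector_derivative has_vector_derivative_def
        blinfun.scaleR_right)
  have d2: "((\<lambda>t. Df (x + t *\<^sub>R h) h) has_real_derivative D2f (x + t *\<^sub>R h) h h) (at t)"
    if "0 \<le> t" "t \<le> 1" for t
    using bounded_bilinear.FDERIV[OF bounded_bilinear_blinfun_apply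
        has_derivative_compose[OF line Df_deriv[OF that]] has_derivative_const]
    by (simp add: has_real_derivative_iff_has_vector_derivative has_vector_derivative_def
        blinfun.scaleR_right blinfun.scaleR_left)
  define diff where "diff = (\<lambda>m::nat. if m = 0 then (\<lambda>t. f (x + t *\<^sub>R h))
     else if m = 1 then (\<lambda>t. Df (x + t *\<^sub>R h) h) else (\<lambda>t. D2f (x + t *\<^sub>R h) h h))"
  have "\<exists>t. 0 < t \<and> t < 1 \<and>
      diff 0 1 = (\<Sum>m<2. diff m 0 / fact m * (1 - 0) ^ m) + diff 2 t / fact 2 * (1 - 0) ^ 2"
    by (rule Taylor_up) (use d1 d2 in \<open>auto simp: diff_def less_2_cases_iff\<close>)
  then show thesis
    using that by (auto simp: diff_def numeral_2_eq_2)
qed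

lemma blinfun_le_sqrt_of_nonneg_expansion:
  fixes D :: "'a::real_normed_vector \<Rightarrow>\<^sub>L real"
  assumes w: "0 \<le> w" "w \<le> B" and pos: "0 < M" "0 < r"
    and expansion: "\<And>h. norm h \<le> r \<Longrightarrow> 0 \<le> w + D h + M / 2 * (norm h)\<^sup>2"
  shows "D g \<le> (sqrt B / r + M * r / (2 * sqrt B)) * sqrt w * norm g"
proof (cases "g = 0")
  case True
  then show ?thesis by simp
next
  case False
  then have g: "0 < norm g" by simp
  have along_g: "D g \<le> norm g * (w / s + M * s / 2)" if s: "0 < s" "s \<le> r" for s
  proof -
    have "0 \<le> w - s / norm g * D g + M / 2 * s\<^sup>2"
      using expansion[of "(- s / norm g) *\<^sub>R g"] s g by (simp add: blinfun.scaleR_right blinfun.minus_right)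
    then have "s / norm g * D g \<le> w + M / 2 * s\<^sup>2" by simp
    then show ?thesis using s g by (simp add: field_simps power2_eq_square)
  qed
  show ?thesis
  proof (cases "w = 0")
    case True
    have "D g \<le> 0"
    proof (rule field_le_epsilon)
      fix e :: real assume "0 < e"
      define s where "s = min r (e / (norm g * M))"
      have s: "0 < s" "s \<le> r" "norm g * M * s \<le> e"
        using \<open>0 < e\<close> g pos by (auto simp: s_def field_simps min_def)
      show "D g \<le> 0 + e"
        using along_g[OF s(1,2)] s(1,3) True \<open>0 < e\<close> by (simp add: field_simps)
    qed
    then show ?thesis using True by simp
  next
    case False
    then have w_pos: "0 < w" using w by simp
    define s where "s = r * sqrt w / sqrt B"
    have s: "0 < s" "s \<le> r"
      using w w_pos pos by (auto simp: s_def field_simps real_sqrt_le_mono)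
    obtain q where q: "0 < q" "w = q\<^sup>2"
      using w_pos real_sqrt_gt_zero real_sqrt_pow2 less_imp_le by metis
    have "w / s + M * s / 2 = sqrt w * (sqrt B / r + M * r / (2 * sqrt B))"
      using q w pos unfolding s_def by (simp add: field_simps power2_eq_square)
    then show ?thesis using along_g[OF s] by (simp add: mult_ac)
  qed
qed

lemma obtain_vanishing_threshold:
  fixes P :: "real \<Rightarrow> real \<Rightarrow> bool"
  assumes mono: "\<And>\<delta> a b. P \<delta> a \<Longrightarrow> a \<le> b \<Longrightarrow> P \<delta> b"
    and exists: "\<And>\<delta>. 0 < \<delta> \<Longrightarrow> \<delta> \<le> \<delta>0 \<Longrightarrow> \<exists>a. P \<delta> a"
    and small: "\<And>e. 0 < e \<Longrightarrow> \<forall>\<^sub>F \<delta> in at_right 0. P \<delta> e"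
  obtains \<rho> where "\<And>\<delta>. 0 < \<delta> \<Longrightarrow> \<delta> \<le> \<delta>0 \<Longrightarrow> 0 < \<rho> \<delta> \<and> P \<delta> (\<rho> \<delta>)"
    and "(\<rho> \<longlongrightarrow> 0) (at_right 0)"
proof
  define A where "A = (\<lambda>\<delta>. {a. 0 < a \<and> P \<delta> a})"
  have bdd: "bdd_below (A \<delta>)" for \<delta>
    unfolding A_def by (rule bdd_belowI[of _ 0]) auto
  have Inf_A: "0 \<le> Inf (A \<delta>)" if "A \<delta> \<noteq> {}" for \<delta>
    using that by (intro cInf_greatest) (auto simp: A_def)
  \<comment> \<open>\<open>Inf (A \<delta>)\<close> need not lie in \<open>A \<delta>\<close>, but by monotonicity every strictly larger value does\<close>
  define \<rho> where "\<rho> = (\<lambda>\<delta>. Inf (A \<delta>) + \<delta>)"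
  show "0 < \<rho> \<delta> \<and> P \<delta> (\<rho> \<delta>)" if \<delta>: "0 < \<delta>" "\<delta> \<le> \<delta>0" for \<delta>
  proof -
    obtain a where "P \<delta> a" using exists[OF \<delta>] by blast
    then have "max 1 a \<in> A \<delta>"
      using mono[of \<delta> a "max 1 a"] by (simp add: A_def)
    then have ne: "A \<delta> \<noteq> {}" by blast
    have "Inf (A \<delta>) < \<rho> \<delta>" using \<delta> by (simp add: \<rho>_def)
    then obtain a where "a \<in> A \<delta>" "a < \<rho> \<delta>"
      using cInf_less_iff[OF ne bdd] by blast
    then show ?thesis using mono Inf_A[OF ne] \<delta> by (auto simp: A_def \<rho>_def)
  qed
  show "(\<rho> \<longlongrightarrow> 0) (at_right 0)"
  proof (rule tendstoI)
    fix e :: real assume "0 < e"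
    have "\<forall>\<^sub>F \<delta> in at_right 0. 0 < \<delta> \<and> \<delta> < e / 2"
      using \<open>0 < e\<close> by (auto simp: eventually_at_right_field intro!: exI[of _ "e / 2"])
    then show "\<forall>\<^sub>F \<delta> in at_right 0. dist (\<rho> \<delta>) 0 < e"
    proof (rule eventually_mono[OF eventually_conj[OF _ small]], safe)
      fix \<delta> assume \<delta>: "0 < \<delta>" "\<delta> < e / 2" and "P \<delta> (e / 2)"
      then have "e / 2 \<in> A \<delta>" using \<open>0 < e\<close> by (simp add: A_def)
      then have "0 \<le> Inf (A \<delta>)" "Inf (A \<delta>) \<le> e / 2"
        using Inf_A cInf_lower[OF _ bdd] by blast+
      then show "dist (\<rho> \<delta>) 0 < e" using \<delta> by (simp add: \<rho>_def)
    qed (use \<open>0 < e\<close> in simp)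
  qed
qed

lemma increment_le_of_growth_lipschitz:
  fixes f :: "'a::real_normed_vector \<Rightarrow> real"
  assumes "\<And>x y. \<bar>f x - f y\<bar> \<le> c * (1 + norm x + norm y) * norm (x - y)"
  shows "f (x + h) - f x \<le> \<bar>c\<bar> * (1 + 2 * norm x + norm h) * norm h"
proof -
  have "f (x + h) - f x \<le> c * (1 + norm (x + h) + norm x) * norm h"
    using assms[of "x + h" x] by simp
  also have "\<dots> \<le> \<bar>c\<bar> * (1 + norm (x + h) + norm x) * norm h"
    by (intro mult_right_mono) auto
  also have "\<dots> \<le> \<bar>c\<bar> * (1 + 2 * norm x + norm h) * norm h"
    using norm_triangle_ineq[of x h] by (intro mult_right_mono mult_left_mono) auto
  finally show ?thesis .
qed

locale C2_on_thickening =
  fixes f :: "'a::euclidean_space \<Rightarrow> real"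
    and Df :: "'a \<Rightarrow> 'a \<Rightarrow>\<^sub>L real"
    and D2f :: "'a \<Rightarrow> 'a \<Rightarrow>\<^sub>L 'a \<Rightarrow>\<^sub>L real"
    and K K' :: "'a set" and r :: real
  assumes compact: "compact K"
    and f_deriv: "\<And>x. x \<in> K \<Longrightarrow> (f has_derivative blinfun_apply (Df x)) (at x)"
    and Df_deriv: "\<And>x. x \<in> K \<Longrightarrow> (Df has_derivative blinfun_apply (D2f x)) (at x)"
    and D2f_cont: "continuous_on K D2f"
    and r_pos: "0 < r"
    and thickening: "\<And>x h. x \<in> K' \<Longrightarrow> norm h \<le> r \<Longrightarrow> x + h \<in> K"
begin

lemma K'_subset_K: "K' \<subseteq> K"
  using thickening[of _ 0] r_pos by auto

lemma Taylor:
  assumes "x \<in> K'" "norm h \<le> r"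
  obtains t where "0 < t" "t < 1" "x + t *\<^sub>R h \<in> K"
    "f (x + h) = f x + Df x h + 1/2 * D2f (x + t *\<^sub>R h) h h"
proof -
  have segment: "x + t *\<^sub>R h \<in> K" if "0 \<le> t" "t \<le> 1" for t
  proof (rule thickening[OF assms(1)])
    have "t * norm h \<le> norm h" using that by (simp add: mult_left_le_one_le)
    then show "norm (t *\<^sub>R h) \<le> r" using assms(2) that by simp
  qed
  obtain t where "0 < t" "t < 1" "f (x + h) = f x + Df x h + 1/2 * D2f (x + t *\<^sub>R h) h h"
    by (rule Taylor_second_order_segment[where x = x and h = h])
      (auto intro!: f_deriv Df_deriv segment)
  then show thesis using that segment by simp
qed

lemma f_bounded:
  obtains B where "0 < B" "\<And>x. x \<in> K \<Longrightarrow> f x \<le> B"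
proof -
  have "continuous_on K f"
    using f_deriv has_derivative_continuous by (blast intro: continuous_at_imp_continuous_on)
  then have "bounded (f ` K)"
    by (rule compact_imp_bounded[OF compact_continuous_image[OF _ compact]])
  then obtain B where "0 < B" "\<forall>x\<in>K. \<bar>f x\<bar> \<le> B"
    unfolding bounded_pos by auto
  then show thesis using that by (meson abs_le_D1)
qed

lemma D2f_bounded:
  obtains M where "0 < M" "\<And>x h. x \<in> K \<Longrightarrow> \<bar>D2f x h h\<bar> \<le> M * (norm h)\<^sup>2"
proof -
  obtain M where "0 < M" and M: "\<And>x. x \<in> K \<Longrightarrow> norm (D2f x) \<le> M"
    using compact_imp_bounded[OF compact_continuous_image[OF D2f_cont compact]]
    unfolding bounded_pos by blast
  have "\<bar>D2f x h h\<bar> \<le> M * (norm h)\<^sup>2" if "x \<in> K" for x h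
    using abs_blinfun_apply2_le[of "D2f x" h] M[OF that] by (meson mult_right_mono order_trans zero_le_power2)
  with \<open>0 < M\<close> show thesis using that by blast
qed

lemma Taylor_remainder_uniform:
  assumes "0 < e"
  obtains \<eta> where "0 < \<eta>" "\<And>x h. x \<in> K' \<Longrightarrow> norm h < \<eta> \<Longrightarrow>
    \<bar>f (x + h) - (f x + Df x h + 1/2 * D2f x h h)\<bar> \<le> e * (norm h)\<^sup>2"
proof -
  obtain d where d: "0 < d"
    "\<And>x y. x \<in> K \<Longrightarrow> y \<in> K \<Longrightarrow> dist y x < d \<Longrightarrow> dist (D2f y) (D2f x) < 2 * e"
    using compact_uniformly_continuous[OF D2f_cont compact] \<open>0 < e\<close>
    unfolding uniformly_continuous_on_def by (metis mult_pos_pos zero_less_numeral)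
  show thesis
  proof (rule that[of "min d r"])
    show "0 < min d r" using d r_pos by simp
    fix x h :: 'a assume x: "x \<in> K'" and h: "norm h < min d r"
    have "norm h \<le> r" using h by simp
    then obtain t where t: "0 < t" "t < 1" "x + t *\<^sub>R h \<in> K"
      "f (x + h) = f x + Df x h + 1/2 * D2f (x + t *\<^sub>R h) h h"
      by (rule Taylor[OF x])
    have "t * norm h \<le> norm h" using t by (simp add: mult_left_le_one_le)
    then have "dist (x + t *\<^sub>R h) x < d" using t h by (simp add: dist_norm)
    then have "norm (D2f (x + t *\<^sub>R h) - D2f x) \<le> 2 * e"
      using d(2)[OF K'_subset_K[THEN subsetD, OF x] t(3)] by (simp add: dist_norm)
    then have "norm (D2f (x + t *\<^sub>R h) - D2f x) * (norm h)\<^sup>2 \<le> 2 * e * (norm h)\<^sup>2"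
      by (simp add: mult_right_mono)
    then have "\<bar>(D2f (x + t *\<^sub>R h) - D2f x) h h\<bar> \<le> 2 * e * (norm h)\<^sup>2"
      using abs_blinfun_apply2_le order_trans by blast
    then show "\<bar>f (x + h) - (f x + Df x h + 1/2 * D2f x h h)\<bar> \<le> e * (norm h)\<^sup>2"
      using t(4) by (simp add: blinfun.diff_left)
  qed
qed

lemma gradient_le_sqrt:
  assumes nonneg: "\<And>x. 0 \<le> f x"
  obtains C where "0 < C" "\<And>x h. x \<in> K' \<Longrightarrow> Df x h \<le> C * sqrt (f x) * norm h"
proof -
  obtain B where B: "0 < B" "\<And>x. x \<in> K \<Longrightarrow> f x \<le> B" using f_bounded by blast
  obtain M where M: "0 < M" "\<And>x h. x \<in> K \<Longrightarrow> \<bar>D2f x h h\<bar> \<le> M * (norm h)\<^sup>2"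
    using D2f_bounded by blast
  show thesis
  proof (rule that)
    show "0 < sqrt B / r + M * r / (2 * sqrt B)"
      using B(1) M(1) r_pos by (intro add_pos_pos divide_pos_pos mult_pos_pos) auto
    fix x h :: 'a assume x: "x \<in> K'"
    have "0 \<le> f x + Df x g + M / 2 * (norm g)\<^sup>2" if g: "norm g \<le> r" for g
    proof -
      obtain t where t: "x + t *\<^sub>R g \<in> K" "f (x + g) = f x + Df x g + 1/2 * D2f (x + t *\<^sub>R g) g g"
        using Taylor[OF x g] by blast
      then show ?thesis using nonneg[of "x + g"] abs_le_D1[OF M(2)[OF t(1), of g]] by simp
    qed
    then show "Df x h \<le> (sqrt B / r + M * r / (2 * sqrt B)) * sqrt (f x) * norm h"
      using blinfun_le_sqrt_of_nonneg_expansion[OF nonneg B(2)[OF K'_subset_K[THEN subsetD, OF x]] M(1) r_pos]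
      by blast
  qed
qed

lemma expansion_le_small_remainder:
  assumes C: "\<And>x h. x \<in> K' \<Longrightarrow> Df x h \<le> C * sqrt (f x) * norm h" and "0 < e"
  obtains \<eta> where "0 < \<eta>" "\<And>x h. x \<in> K' \<Longrightarrow> norm h < \<eta> \<Longrightarrow>
    f (x + h) \<le> f x + C * sqrt (f x) * norm h + 1/2 * D2f x h h + e * (norm h)\<^sup>2"
proof -
  obtain \<eta> where "0 < \<eta>" and \<eta>: "\<And>x h. x \<in> K' \<Longrightarrow> norm h < \<eta> \<Longrightarrow>
      \<bar>f (x + h) - (f x + Df x h + 1/2 * D2f x h h)\<bar> \<le> e * (norm h)\<^sup>2"
    using Taylor_remainder_uniform[OF \<open>0 < e\<close>] by blast
  show thesis
  proof (rule that[OF \<open>0 < \<eta>\<close>])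
    fix x h :: 'a assume "x \<in> K'" "norm h < \<eta>"
    then show "f (x + h) \<le> f x + C * sqrt (f x) * norm h + 1/2 * D2f x h h + e * (norm h)\<^sup>2"
      using \<eta>[of x h] C[of x h] by linarith
  qed
qed

lemma expansion_le_bounded_remainder:
  assumes nonneg: "\<And>x. 0 \<le> f x"
    and C: "\<And>x h. x \<in> K' \<Longrightarrow> Df x h \<le> C * sqrt (f x) * norm h" "0 \<le> C"
    and increment: "\<And>x h. x \<in> K' \<Longrightarrow> norm h \<le> R \<Longrightarrow> f (x + h) - f x \<le> L * norm h" "0 \<le> L"
  obtains a where "\<And>x h. x \<in> K' \<Longrightarrow> norm h \<le> R \<Longrightarrow>
    f (x + h) \<le> f x + C * sqrt (f x) * norm h + 1/2 * D2f x h h + a * (norm h)\<^sup>2"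
proof -
  obtain \<eta> where "0 < \<eta>" and near: "\<And>x h. x \<in> K' \<Longrightarrow> norm h < \<eta> \<Longrightarrow>
      f (x + h) \<le> f x + C * sqrt (f x) * norm h + 1/2 * D2f x h h + 1 * (norm h)\<^sup>2"
    by (rule expansion_le_small_remainder[of C 1]) (use C(1) in auto)
  obtain M where M: "0 < M" "\<And>x h. x \<in> K \<Longrightarrow> \<bar>D2f x h h\<bar> \<le> M * (norm h)\<^sup>2"
    using D2f_bounded by blast
  show thesis
  proof (rule that[of "1 + L / \<eta> + M"])
    fix x h :: 'a assume x: "x \<in> K'" and h: "norm h \<le> R"
    have split: "(1 + L / \<eta> + M) * (norm h)\<^sup>2 = (norm h)\<^sup>2 + L / \<eta> * (norm h)\<^sup>2 + M * (norm h)\<^sup>2"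
      by (simp add: algebra_simps)
    have nonneg_terms: "0 \<le> (norm h)\<^sup>2" "0 \<le> L / \<eta> * (norm h)\<^sup>2" "0 \<le> M * (norm h)\<^sup>2"
      using \<open>0 < \<eta>\<close> \<open>0 \<le> L\<close> M(1) by simp_all
    show "f (x + h) \<le> f x + C * sqrt (f x) * norm h + 1/2 * D2f x h h + (1 + L / \<eta> + M) * (norm h)\<^sup>2"
    proof (cases "norm h < \<eta>")
      case True
      then show ?thesis using near[OF x True] split nonneg_terms by linarith
    next
      case False
      have "L * norm h = L / \<eta> * (\<eta> * norm h)" using \<open>0 < \<eta>\<close> by simp
      also have "\<dots> \<le> L / \<eta> * (norm h)\<^sup>2"
        using False \<open>0 < \<eta>\<close> \<open>0 \<le> L\<close>
        by (intro mult_left_mono) (auto simp: power2_eq_square mult_right_mono)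
      finally have "L * norm h \<le> L / \<eta> * (norm h)\<^sup>2" .
      moreover have "- D2f x h h \<le> M * (norm h)\<^sup>2"
        using M(2)[OF K'_subset_K[THEN subsetD, OF x], of h] by simp
      moreover have "0 \<le> C * sqrt (f x) * norm h" using C(2) nonneg by simp
      ultimately show ?thesis
        using increment(1)[OF x h] split nonneg_terms by linarith
    qed
  qed
qed

end

lemma C2_on_thickening_infdist:
  fixes f :: "'a::euclidean_space \<Rightarrow> real" and S :: "'a set"
  assumes S: "bounded S" "S \<noteq> {}"
    and \<delta>0: "0 < \<delta>0"
    and f_deriv: "\<And>x. infdist x S < \<delta>0 \<Longrightarrow> (f has_derivative blinfun_apply (Df x)) (at x)"
    and Df_deriv: "\<And>x. infdist x S < \<delta>0 \<Longrightarrow> (Df has_derivative blinfun_apply (D2f x)) (at x)"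
    and D2f_cont: "continuous_on {x. infdist x S < \<delta>0} D2f"
  shows "C2_on_thickening f Df D2f {x. infdist x S \<le> 3 * \<delta>0 / 4} {x. infdist x S \<le> \<delta>0 / 2} (\<delta>0 / 4)"
proof
  show "compact {x. infdist x S \<le> 3 * \<delta>0 / 4}" by (rule compact_infdist_le_bounded[OF S])
  show "(f has_derivative blinfun_apply (Df x)) (at x)"
    and "(Df has_derivative blinfun_apply (D2f x)) (at x)" if "x \<in> {x. infdist x S \<le> 3 * \<delta>0 / 4}" for x
    using that \<delta>0 by (auto intro!: f_deriv Df_deriv)
  show "continuous_on {x. infdist x S \<le> 3 * \<delta>0 / 4} D2f"
    by (rule continuous_on_subset[OF D2f_cont]) (use \<delta>0 in auto)
  show "x + h \<in> {x. infdist x S \<le> 3 * \<delta>0 / 4}"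
    if "x \<in> {x. infdist x S \<le> \<delta>0 / 2}" "norm h \<le> \<delta>0 / 4" for x h
    using infdist_triangle[of "x + h" S x] that by (simp add: dist_norm)
qed (use \<delta>0 in simp)

lemma increment_le_linear_near_bounded_set:
  fixes f :: "'a::real_normed_vector \<Rightarrow> real" and S :: "'a set"
  assumes S: "bounded S" "S \<noteq> {}"
    and growth: "\<And>x y. \<bar>f x - f y\<bar> \<le> c * (1 + norm x + norm y) * norm (x - y)"
  obtains L where "0 \<le> L"
    "\<And>x h. infdist x S \<le> a \<Longrightarrow> norm h \<le> R \<Longrightarrow> f (x + h) - f x \<le> L * norm h"
proof -
  obtain M0 where M0: "0 \<le> M0" "\<And>x. norm x \<le> infdist x S + M0"
    using norm_le_infdist_add[OF S] by blast
  show thesis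
  proof (rule that[of "\<bar>c\<bar> * (1 + 2 * (\<bar>a\<bar> + M0) + \<bar>R\<bar>)"])
    show "0 \<le> \<bar>c\<bar> * (1 + 2 * (\<bar>a\<bar> + M0) + \<bar>R\<bar>)" using M0(1) by simp
    fix x h :: 'a assume "infdist x S \<le> a" "norm h \<le> R"
    then have "1 + 2 * norm x + norm h \<le> 1 + 2 * (\<bar>a\<bar> + M0) + \<bar>R\<bar>"
      using M0(2)[of x] by (smt (verit) abs_ge_self)
    then have "\<bar>c\<bar> * (1 + 2 * norm x + norm h) * norm h
        \<le> \<bar>c\<bar> * (1 + 2 * (\<bar>a\<bar> + M0) + \<bar>R\<bar>) * norm h"
      by (intro mult_right_mono mult_left_mono) auto
    then show "f (x + h) - f x \<le> \<bar>c\<bar> * (1 + 2 * (\<bar>a\<bar> + M0) + \<bar>R\<bar>) * norm h"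
      using increment_le_of_growth_lipschitz[OF growth, of x h] by linarith
  qed
qed

lemma nonneg_C2_expansion_near_bounded_set:
  fixes f :: "'a::euclidean_space \<Rightarrow> real" and S :: "'a set"
  assumes S: "bounded S" "S \<noteq> {}"
    and nonneg: "\<And>x. 0 \<le> f x"
    and \<delta>0: "0 < \<delta>0"
    and f_deriv: "\<And>x. infdist x S < \<delta>0 \<Longrightarrow> (f has_derivative blinfun_apply (Df x)) (at x)"
    and Df_deriv: "\<And>x. infdist x S < \<delta>0 \<Longrightarrow> (Df has_derivative blinfun_apply (D2f x)) (at x)"
    and D2f_cont: "continuous_on {x. infdist x S < \<delta>0} D2f"
    and growth: "\<And>x y. \<bar>f x - f y\<bar> \<le> c * (1 + norm x + norm y) * norm (x - y)"
  obtains C \<rho> where "0 < C" "\<And>\<delta>. 0 < \<delta> \<Longrightarrow> \<delta> \<le> \<delta>0 / 2 \<Longrightarrow> 0 < \<rho> \<delta>"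
    and "(\<rho> \<longlongrightarrow> 0) (at_right 0)"
    and "\<And>\<delta> x h. 0 < \<delta> \<Longrightarrow> \<delta> \<le> \<delta>0 / 2 \<Longrightarrow> infdist x S < \<delta> \<Longrightarrow> norm h < \<delta> \<Longrightarrow>
      f (x + h) \<le> f x + C * sqrt (f x) * norm h + 1/2 * D2f x h h + \<rho> \<delta> * (norm h)\<^sup>2"
proof -
  define K' where "K' = {x. infdist x S \<le> \<delta>0 / 2}"
  interpret C2_on_thickening f Df D2f "{x. infdist x S \<le> 3 * \<delta>0 / 4}" K' "\<delta>0 / 4"
    unfolding K'_def by (rule C2_on_thickening_infdist[OF S \<delta>0 f_deriv Df_deriv D2f_cont])
  obtain C where C: "0 < C" "\<And>x h. x \<in> K' \<Longrightarrow> Df x h \<le> C * sqrt (f x) * norm h"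
    using gradient_le_sqrt nonneg by blast
  obtain L where L: "0 \<le> L"
    and increment: "\<And>x h. x \<in> K' \<Longrightarrow> norm h \<le> \<delta>0 / 2 \<Longrightarrow> f (x + h) - f x \<le> L * norm h"
    unfolding K'_def by (rule increment_le_linear_near_bounded_set[OF S growth]) blast
  obtain a where a: "\<And>x h. x \<in> K' \<Longrightarrow> norm h \<le> \<delta>0 / 2 \<Longrightarrow>
      f (x + h) \<le> f x + C * sqrt (f x) * norm h + 1/2 * D2f x h h + a * (norm h)\<^sup>2"
    by (rule expansion_le_bounded_remainder[where C = C and R = "\<delta>0 / 2" and L = L])
      (use nonneg C increment L in auto)
  define P where "P = (\<lambda>\<delta> b. \<forall>x h. infdist x S < \<delta> \<and> norm h < \<delta> \<longrightarrow>
      f (x + h) \<le> f x + C * sqrt (f x) * norm h + 1/2 * D2f x h h + b * (norm h)\<^sup>2)"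
  have P_mono: "P \<delta> b" if "P \<delta> b'" "b' \<le> b" for \<delta> b' b
  proof -
    have "b' * (norm h)\<^sup>2 \<le> b * (norm h)\<^sup>2" for h :: 'a
      using that(2) by (simp add: mult_right_mono)
    then show ?thesis using that(1) unfolding P_def by (meson add_left_mono order_trans)
  qed
  have P_bounded: "\<exists>b. P \<delta> b" if "0 < \<delta>" "\<delta> \<le> \<delta>0 / 2" for \<delta>
    using that a by (auto simp: P_def K'_def intro!: exI[of _ a])
  have P_small: "\<forall>\<^sub>F \<delta> in at_right 0. P \<delta> e" if e: "0 < e" for e
  proof -
    obtain \<eta> where "0 < \<eta>" and \<eta>: "\<And>x h. x \<in> K' \<Longrightarrow> norm h < \<eta> \<Longrightarrow>
        f (x + h) \<le> f x + C * sqrt (f x) * norm h + 1/2 * D2f x h h + e * (norm h)\<^sup>2"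
      by (rule expansion_le_small_remainder[where C = C and e = e]) (use C(2) e in auto)
    show ?thesis
      unfolding eventually_at_right_field
      using \<open>0 < \<eta>\<close> \<delta>0 \<eta> by (intro exI[of _ "min \<eta> (\<delta>0 / 2)"]) (auto simp: P_def K'_def)
  qed
  obtain \<rho> where \<rho>: "\<And>\<delta>. 0 < \<delta> \<Longrightarrow> \<delta> \<le> \<delta>0 / 2 \<Longrightarrow> 0 < \<rho> \<delta> \<and> P \<delta> (\<rho> \<delta>)"
    and "(\<rho> \<longlongrightarrow> 0) (at_right 0)"
    by (rule obtain_vanishing_threshold[of P "\<delta>0 / 2"]) (use P_mono P_bounded P_small in blast)+
  then show thesis
    using that[OF C(1)] \<rho> unfolding P_def by blast
qed

lemma increment_le_sqrt_away_from_bounded_set: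
  fixes f :: "'a::real_normed_vector \<Rightarrow> real" and S :: "'a set"
  assumes S: "bounded S" "S \<noteq> {}"
    and coercive: "0 < c1" "\<And>x. c1 * (infdist x S)\<^sup>2 \<le> f x"
    and growth: "\<And>x y. \<bar>f x - f y\<bar> \<le> c * (1 + norm x + norm y) * norm (x - y)"
  obtains C :: "real \<Rightarrow> real" where "\<And>\<delta>. 0 < \<delta> \<Longrightarrow> 0 < C \<delta>"
    and "\<And>\<delta> x h. 0 < \<delta> \<Longrightarrow> \<delta> \<le> infdist x S \<Longrightarrow> norm h < \<delta> \<Longrightarrow>
      f (x + h) \<le> f x + C \<delta> * sqrt (f x) * norm h"
proof -
  obtain M0 where M0: "0 \<le> M0" "\<And>x. norm x \<le> infdist x S + M0"
    using norm_le_infdist_add[OF S] by blast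
  define Q where "Q = (\<lambda>\<delta>. (1 + 2 * M0 + \<delta>) / \<delta> + 2)"
  show thesis
  proof (rule that[of "\<lambda>\<delta>. \<bar>c\<bar> * Q \<delta> / sqrt c1 + 1"])
    show "0 < \<bar>c\<bar> * Q \<delta> / sqrt c1 + 1" if "0 < \<delta>" for \<delta>
      using that M0(1) coercive(1) by (simp add: Q_def add_nonneg_pos)
    fix \<delta> :: real and x h :: 'a assume \<delta>: "0 < \<delta>" "\<delta> \<le> infdist x S" "norm h < \<delta>"
    define d where "d = infdist x S"
    \<comment> \<open>at distance \<open>d \<ge> \<delta>\<close> from \<open>S\<close>, both the size of \<open>x\<close> and \<open>sqrt (f x)\<close> are comparable to \<open>d\<close>\<close>
    have "1 + 2 * norm x + norm h \<le> Q \<delta> * d"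
    proof -
      have "1 + 2 * norm x + norm h \<le> (1 + 2 * M0 + \<delta>) * 1 + 2 * d"
        using M0(2)[of x] \<delta>(3) by (simp add: d_def)
      also have "\<dots> \<le> (1 + 2 * M0 + \<delta>) * (d / \<delta>) + 2 * d"
        using \<delta> M0(1) by (intro add_right_mono mult_left_mono) (auto simp: d_def)
      also have "\<dots> = Q \<delta> * d"
        using \<delta>(1) by (simp add: Q_def field_simps)
      finally show ?thesis .
    qed
    then have "\<bar>c\<bar> * (1 + 2 * norm x + norm h) \<le> \<bar>c\<bar> * Q \<delta> / sqrt c1 * (sqrt c1 * d)"
      using coercive(1) by (simp add: mult_left_mono)
    also have "\<dots> \<le> \<bar>c\<bar> * Q \<delta> / sqrt c1 * sqrt (f x)"
    proof (rule mult_left_mono)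
      show "sqrt c1 * d \<le> sqrt (f x)"
        using real_sqrt_le_mono[OF coercive(2)[of x]] \<delta> by (simp add: d_def real_sqrt_mult)
      show "0 \<le> \<bar>c\<bar> * Q \<delta> / sqrt c1"
        using \<delta>(1) M0(1) coercive(1) by (intro divide_nonneg_pos mult_nonneg_nonneg) (auto simp: Q_def)
    qed
    also have "\<dots> \<le> (\<bar>c\<bar> * Q \<delta> / sqrt c1 + 1) * sqrt (f x)"
      using coercive(2)[of x] coercive(1) by (simp add: distrib_right order_trans[OF _ coercive(2)])
    finally have "\<bar>c\<bar> * (1 + 2 * norm x + norm h) * norm h \<le> (\<bar>c\<bar> * Q \<delta> / sqrt c1 + 1) * sqrt (f x) * norm h"
      by (simp add: mult_right_mono)
    then show "f (x + h) \<le> f x + (\<bar>c\<bar> * Q \<delta> / sqrt c1 + 1) * sqrt (f x) * norm h"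
      using increment_le_of_growth_lipschitz[OF growth, of x h] by linarith
  qed
qed

lemma bounded_linear_matrix_mult_const:
  "bounded_linear (\<lambda>R::real^'n^'m. R ** X)"
proof -
  have "linear (\<lambda>R::real^'n^'m. R ** X)"
    by (rule linearI) (simp_all add: matrix_matrix_mult_def vec_eq_iff distrib_right
        sum.distrib sum_distrib_left mult.assoc)
  then show ?thesis by (simp add: linear_conv_bounded_linear)
qed

lemma bounded_orthogonal_matrices: "bounded {R :: real^'n^'n. orthogonal_matrix R}"
proof -
  have "norm R \<le> real CARD('n)" if "orthogonal_matrix R" for R :: "real^'n^'n"
  proof -
    have "norm R \<le> (\<Sum>i\<in>UNIV. norm (R $ i))"
      unfolding norm_vec_def by (rule L2_set_le_sum) auto
    also have "\<dots> = real CARD('n)"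
      using that by (simp add: orthogonal_matrix_orthonormal_rows row_def)
    finally show ?thesis .
  qed
  then show ?thesis unfolding bounded_iff by blast
qed

lemma bounded_wells: "bounded (wells \<kappa> k0)"
proof -
  have wells_subset: "wells \<kappa> k0 \<subseteq>
      (\<lambda>R. R ** mat 1) ` {R. orthogonal_matrix R} \<union> (\<lambda>R. R ** wellB \<kappa> k0) ` {R. orthogonal_matrix R}"
    by (auto simp: wells_def SOd_def rotation_matrix_def)
  have image_bounded: "bounded ((\<lambda>R. R ** X) ` {R :: real^'d^'d. orthogonal_matrix R})" for X
    by (rule bounded_linear_image[OF bounded_orthogonal_matrices bounded_linear_matrix_mult_const])
  show ?thesis
    by (rule bounded_subset[OF _ wells_subset]) (simp add: image_bounded bounded_orthogonal_matrices)
qed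

lemma wells_nonempty: "wells \<kappa> k0 \<noteq> {}"
  unfolding wells_def SOd_def rotation_matrix_def
  using orthogonal_matrix_id det_I by blast

theorem lemma6p3:
  fixes W :: "real^'d^'d \<Rightarrow> real"
    and DW :: "real^'d^'d \<Rightarrow> ((real^'d^'d) \<Rightarrow>\<^sub>L real)"
    and D2W :: "real^'d^'d \<Rightarrow> ((real^'d^'d) \<Rightarrow>\<^sub>L ((real^'d^'d) \<Rightarrow>\<^sub>L real))"
    and \<kappa> \<delta>W :: real and k0 :: 'd
  assumes dim: "CARD('d) \<ge> 2"
    and kappa: "\<kappa> > 0"
    and nonneg: "\<forall>F. W F \<ge> 0"
    and H1: "continuous_on UNIV W"
    and H2: "\<forall>R\<in>SOd. \<forall>F. W (R ** F) = W F"
    and H3: "W (mat 1) = 0" "W (wellB \<kappa> k0) = 0"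
    and H4: "\<exists>c1>0. \<forall>F. W F \<ge> c1 * (infdist F (wells \<kappa> k0))\<^sup>2"
    and H5: "\<delta>W > 0" "C2_on_with {F. infdist F (wells \<kappa> k0) < \<delta>W} W DW D2W"
    and H7: "\<exists>c3. \<forall>F1 F2. \<bar>W F1 - W F2\<bar> \<le> c3 * (1 + norm F1 + norm F2) * norm (F1 - F2)"
  shows "\<exists>C>0. \<exists>C\<delta> \<rho> :: real \<Rightarrow> real.
           (\<forall>\<delta>. 0 < \<delta> \<and> \<delta> \<le> \<delta>W / 2 \<longrightarrow> C\<delta> \<delta> > 0 \<and> \<rho> \<delta> > 0) \<and>
           (\<rho> \<longlongrightarrow> 0) (at_right 0) \<and>
           (\<forall>\<delta>. 0 < \<delta> \<and> \<delta> \<le> \<delta>W / 2 \<longrightarrow>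
              (\<forall>F G. infdist F (wells \<kappa> k0) < \<delta> \<and> norm G < \<delta> \<longrightarrow>
                 W (F + G) \<le> W F + C * sqrt (W F) * norm G
                   + 1/2 * blinfun_apply (blinfun_apply (D2W F) G) G + \<rho> \<delta> * (norm G)\<^sup>2) \<and>
              (\<forall>F G. \<not> (infdist F (wells \<kappa> k0) < \<delta>) \<and> norm G < \<delta> \<longrightarrow>
                 W (F + G) \<le> W F + C\<delta> \<delta> * sqrt (W F) * norm G))"
proof -
  obtain c1 where c1: "0 < c1" "\<And>F. c1 * (infdist F (wells \<kappa> k0))\<^sup>2 \<le> W F"
    using H4 by blast
  obtain c3 where c3: "\<And>F1 F2. \<bar>W F1 - W F2\<bar> \<le> c3 * (1 + norm F1 + norm F2) * norm (F1 - F2)"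
    using H7 by blast
  obtain C \<rho> where C: "0 < C" and \<rho>: "\<And>\<delta>. 0 < \<delta> \<Longrightarrow> \<delta> \<le> \<delta>W / 2 \<Longrightarrow> 0 < \<rho> \<delta>"
    and \<rho>_lim: "(\<rho> \<longlongrightarrow> 0) (at_right 0)"
    and near: "\<And>\<delta> F G. 0 < \<delta> \<Longrightarrow> \<delta> \<le> \<delta>W / 2 \<Longrightarrow>
      infdist F (wells \<kappa> k0) < \<delta> \<Longrightarrow> norm G < \<delta> \<Longrightarrow>
      W (F + G) \<le> W F + C * sqrt (W F) * norm G + 1/2 * D2W F G G + \<rho> \<delta> * (norm G)\<^sup>2"
    by (rule nonneg_C2_expansion_near_bounded_set[OF bounded_wells wells_nonempty _ H5(1) _ _ _ c3])
      (use nonneg H5(2) in \<open>auto simp: C2_on_with_def\<close>)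
  obtain C\<delta> where C\<delta>: "\<And>\<delta>. 0 < \<delta> \<Longrightarrow> 0 < C\<delta> \<delta>"
    and away: "\<And>\<delta> F G. 0 < \<delta> \<Longrightarrow> \<delta> \<le> infdist F (wells \<kappa> k0) \<Longrightarrow> norm G < \<delta> \<Longrightarrow>
      W (F + G) \<le> W F + C\<delta> \<delta> * sqrt (W F) * norm G"
    using increment_le_sqrt_away_from_bounded_set[OF bounded_wells wells_nonempty c1 c3] by blast
  show ?thesis
    using C C\<delta> \<rho> \<rho>_lim near away by (intro exI[of _ C] conjI exI[of _ C\<delta>] exI[of _ \<rho>]) auto
qed

end
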